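(* Let $A\in\mathbb{C}^{n\times m}$, $\alpha_1\ge1/\sqrt{n}$, $\alpha_2\ge1/\sqrt{m}$, $B\in\mathbb{C}^{l\times n}$, $b\in\mathbb{R}^l$, $D\in\mathbb{C}^{q\times m}$, $d\in\mathbb{R}^q$, and define $$S_1=\Big\{u\in\mathbb{C}^n:\|u\|\le\alpha_1,\ \operatorname{Re}(u)\ge0,\ \textstyle\sum_{i=1}^n u_i=1,\ \operatorname{Re}(Bu)\le b\Big\},$$ $$S_2=\Big\{v\in\mathbb{C}^m:\|v\|\le\alpha_2,\ \operatorname{Re}(v)\ge0,\ \textstyle\sum_{i=1}^m v_i=1,\ \operatorname{Re}(Dv)\ge d\Big\},$$ and $f(u,v)=\operatorname{Re}(u^HAv)$. Assume (Slater condition) that there exist $u\in S_1$ and $v\in S_2$ for which all the defining inequality constraints of $S_1$ and of $S_2$ hold strictly. Then there exists $(u^\star,v^\star)\in S_1\times S_2$ such that $$f(u,v^\star)\le f(u^\star,v^\star)\le f(u^\star,v)\qquad\forall u\in S_1,\ v\in S_2.$$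
   Context: $\|\cdot\|$ is the Euclidean norm on $\mathbb{C}^k$, $u^H$ is the conjugate transpose, inequalities between real vectors are componentwise, and $\sum_i u_i=1$ is an equality of complex numbers. Player 1 (choosing $u$) maximizes $f$ and player 2 (choosing $v$) minimizes $f$. *)

theory Defs
  imports "HOL-Analysis.Analysis"
begin

definition S1 :: "real \<Rightarrow> complex^'n^'l \<Rightarrow> real^'l \<Rightarrow> (complex^'n) set" where
  "S1 \<alpha>1 B b = {u. norm u \<le> \<alpha>1 \<and> (\<forall>i. 0 \<le> Re (u $ i)) \<and> (\<Sum>i\<in>UNIV. u $ i) = 1
                     \<and> (\<forall>k. Re ((B *v u) $ k) \<le> b $ k)}"

definition S2 :: "real \<Rightarrow> complex^'m^'q \<Rightarrow> real^'q \<Rightarrow> (complex^'m) set" where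
  "S2 \<alpha>2 D d = {v. norm v \<le> \<alpha>2 \<and> (\<forall>i. 0 \<le> Re (v $ i)) \<and> (\<Sum>i\<in>UNIV. v $ i) = 1
                     \<and> (\<forall>k. d $ k \<le> Re ((D *v v) $ k))}"

definition payoff :: "complex^'m^'n \<Rightarrow> complex^'n \<Rightarrow> complex^'m \<Rightarrow> real" where
  "payoff A u v = Re (\<Sum>i\<in>UNIV. cnj (u $ i) * (A *v v) $ i)"

end

theory Submission
  imports Defs
begin

text \<open>
  The payoff is real-bilinear and both strategy sets are compact and convex (a ball cut by finitely
  many real-linear half-spaces and one affine hyperplane), so a saddle point exists by the classical
  fixed-point argument: with \<open>P\<^sub>S\<close> the metric projection onto \<open>S\<close>, a fixed point of
  \<open>(u, v) \<mapsto> (P\<^sub>S\<^sub>1 (u + \<nabla>\<^sub>u f), P\<^sub>S\<^sub>2 (v - \<nabla>\<^sub>v f))\<close>, which Brouwer's theorem provides,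
  satisfies exactly the two variational inequalities of a saddle point.
\<close>

lemma bilinear_eq_inner_left:
  fixes f :: "'a::euclidean_space \<Rightarrow> 'b::real_vector \<Rightarrow> real"
  assumes "bilinear f"
  shows "f u v = inner u (\<Sum>b\<in>Basis. f b v *\<^sub>R b)"
proof -
  interpret linear "\<lambda>u. f u v" using assms by (simp add: bilinear_def)
  have "f u v = f (\<Sum>b\<in>Basis. inner u b *\<^sub>R b) v"
    by (simp add: euclidean_representation)
  also have "\<dots> = inner u (\<Sum>b\<in>Basis. f b v *\<^sub>R b)"
    by (simp add: sum scale inner_sum_right mult.commute)
  finally show ?thesis .
qed

lemma bilinear_eq_inner_right:
  fixes f :: "'a::real_vector \<Rightarrow> 'b::euclidean_space \<Rightarrow> real"
  assumes "bilinear f"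
  shows "f u v = inner (\<Sum>b\<in>Basis. f u b *\<^sub>R b) v"
proof -
  have "bilinear (\<lambda>v u. f u v)"
    using assms unfolding bilinear_def by blast
  then have "f u v = inner v (\<Sum>b\<in>Basis. f u b *\<^sub>R b)"
    by (rule bilinear_eq_inner_left)
  then show ?thesis
    by (simp only: inner_commute)
qed

lemma continuous_on_bilinear_gradient:
  fixes f :: "'a::euclidean_space \<Rightarrow> 'b::euclidean_space \<Rightarrow> real"
  assumes "bilinear f"
  shows "continuous_on UNIV (\<lambda>v. \<Sum>b\<in>Basis. f b v *\<^sub>R b)"
    and "continuous_on UNIV (\<lambda>u. \<Sum>b\<in>Basis. f u b *\<^sub>R b)"
proof -
  have "continuous_on UNIV (f u)" "continuous_on UNIV (\<lambda>u. f u v)" for u v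
    using assms unfolding bilinear_def linear_conv_bounded_linear
    by (auto intro: linear_continuous_on)
  then show "continuous_on UNIV (\<lambda>v. \<Sum>b\<in>Basis. f b v *\<^sub>R b)"
    and "continuous_on UNIV (\<lambda>u. \<Sum>b\<in>Basis. f u b *\<^sub>R b)"
    by (auto intro!: continuous_intros)
qed

lemma closest_point_add_fixed_dot:
  assumes "convex S" "closed S" "closest_point S (x + w) = x" "y \<in> S"
  shows "inner w (y - x) \<le> 0"
  using closest_point_dot[OF assms(1,2,4), of "x + w"] assms(3) by simp

lemma bilinear_saddle_point:
  fixes f :: "'a::euclidean_space \<Rightarrow> 'b::euclidean_space \<Rightarrow> real"
  assumes "bilinear f"
    and S: "compact S" "convex S" "S \<noteq> {}"
    and T: "compact T" "convex T" "T \<noteq> {}"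
  shows "\<exists>us\<in>S. \<exists>vs\<in>T. \<forall>u\<in>S. \<forall>v\<in>T. f u vs \<le> f us vs \<and> f us vs \<le> f us v"
proof -
  define grad_u where "grad_u v = (\<Sum>b\<in>Basis. f b v *\<^sub>R b)" for v
  define grad_v where "grad_v u = (\<Sum>b\<in>Basis. f u b *\<^sub>R b)" for u
  have f_grad_u: "f u v = inner u (grad_u v)" and f_grad_v: "f u v = inner (grad_v u) v" for u v
    unfolding grad_u_def grad_v_def
    using bilinear_eq_inner_left bilinear_eq_inner_right assms(1) by blast+
  have "closed S" "closed T"
    using S T compact_imp_closed by auto
  define F where "F p = (closest_point S (fst p + grad_u (snd p)), closest_point T (snd p - grad_v (fst p)))"
    for p
  have "continuous_on (S \<times> T) F"
    unfolding F_def grad_u_def grad_v_def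
    by (intro continuous_on_Pair continuous_on_compose2[OF continuous_on_closest_point]
        continuous_intros continuous_on_compose2[OF continuous_on_bilinear_gradient(1)[OF assms(1)]]
        continuous_on_compose2[OF continuous_on_bilinear_gradient(2)[OF assms(1)]])
      (use S T \<open>closed S\<close> \<open>closed T\<close> in auto)
  moreover have "F \<in> S \<times> T \<rightarrow> S \<times> T"
    unfolding F_def
    using closest_point_in_set[OF \<open>closed S\<close> S(3)] closest_point_in_set[OF \<open>closed T\<close> T(3)] by auto
  ultimately obtain p where "p \<in> S \<times> T" "F p = p"
    using brouwer[OF compact_Times[OF S(1) T(1)] convex_Times[OF S(2) T(2)]] S(3) T(3) by blast
  then obtain us vs where uvs: "us \<in> S" "vs \<in> T" "F (us, vs) = (us, vs)"
    by (cases p) auto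
  show ?thesis
  proof (intro bexI[OF _ uvs(1)] bexI[OF _ uvs(2)] ballI conjI)
    fix u assume "u \<in> S"
    then have "inner (grad_u vs) (u - us) \<le> 0"
      using uvs(3) closest_point_add_fixed_dot[OF S(2) \<open>closed S\<close>] by (simp add: F_def)
    then show "f u vs \<le> f us vs"
      by (simp add: f_grad_u inner_diff_right inner_commute)
  next
    fix v assume "v \<in> T"
    moreover have "closest_point T (vs + - grad_v us) = vs"
      using uvs(3) by (simp add: F_def)
    ultimately have "inner (- grad_v us) (v - vs) \<le> 0"
      using closest_point_add_fixed_dot[OF T(2) \<open>closed T\<close>] by blast
    then show "f us vs \<le> f us v"
      by (simp add: f_grad_v inner_diff_right)
  qed
qed

lemma bilinear_payoff: "bilinear (payoff A)"
  unfolding bilinear_def payoff_def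
  by (auto intro!: linearI simp: algebra_simps sum.distrib sum_distrib_left Re_sum
      linear_cmul[OF matrix_vector_mul_linear])

lemma S2_eq_S1_uminus: "S2 \<alpha> D d = S1 \<alpha> (- D) (- d)"
  by (auto simp: S1_def S2_def matrix_vector_mult_def sum_negf)

lemma compact_S1: "compact (S1 \<alpha> B b)"
proof -
  have "closed (S1 \<alpha> B b)"
    unfolding S1_def matrix_vector_mult_def
    by (intro closed_Collect_conj closed_Collect_all closed_Collect_le closed_Collect_eq continuous_intros)
  moreover have "S1 \<alpha> B b \<subseteq> cball 0 \<alpha>"
    by (auto simp: S1_def)
  ultimately show ?thesis
    by (meson bounded_cball bounded_subset compact_eq_bounded_closed)
qed

lemma convex_S1: "convex (S1 \<alpha> B b)"
proof -
  have lin_nth: "linear (\<lambda>u::complex^'n. Re (u $ i))" for i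
    by (auto intro!: linearI)
  have lin_sum: "linear (\<lambda>u::complex^'n. \<Sum>i\<in>UNIV. u $ i)"
    by (auto intro!: linearI simp: sum.distrib scaleR_sum_right)
  have lin_B: "linear (\<lambda>u. Re ((B *v u) $ k))" for k
    by (auto intro!: linearI simp: linear_cmul[OF matrix_vector_mul_linear] algebra_simps)
  have "S1 \<alpha> B b = cball 0 \<alpha> \<inter> (\<Inter>i. (\<lambda>u. Re (u $ i)) -` {0..})
      \<inter> (\<lambda>u. \<Sum>i\<in>UNIV. u $ i) -` {1} \<inter> (\<Inter>k. (\<lambda>u. Re ((B *v u) $ k)) -` {..b $ k})"
    by (auto simp: S1_def)
  then show ?thesis
    by (simp only:) (intro convex_Int convex_INT convex_linear_vimage lin_nth lin_sum lin_B convex_cball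
        convex_singleton convex_real_interval)
qed

theorem theorem4:
  fixes A :: "complex^'m^'n" and B :: "complex^'n^'l" and b :: "real^'l"
    and D :: "complex^'m^'q" and d :: "real^'q" and \<alpha>1 \<alpha>2 :: real
  assumes "\<alpha>1 \<ge> 1 / sqrt (real CARD('n))" and "\<alpha>2 \<ge> 1 / sqrt (real CARD('m))"
    and slater1: "\<exists>u \<in> S1 \<alpha>1 B b. norm u < \<alpha>1 \<and> (\<forall>i. 0 < Re (u $ i))
                     \<and> (\<forall>k. Re ((B *v u) $ k) < b $ k)"
    and slater2: "\<exists>v \<in> S2 \<alpha>2 D d. norm v < \<alpha>2 \<and> (\<forall>i. 0 < Re (v $ i))
                     \<and> (\<forall>k. d $ k < Re ((D *v v) $ k))"
  shows "\<exists>us \<in> S1 \<alpha>1 B b. \<exists>vs \<in> S2 \<alpha>2 D d.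
           \<forall>u \<in> S1 \<alpha>1 B b. \<forall>v \<in> S2 \<alpha>2 D d.
             payoff A u vs \<le> payoff A us vs \<and> payoff A us vs \<le> payoff A us v"
proof -
  obtain u0 where "u0 \<in> S1 \<alpha>1 B b"
    using slater1 by blast
  moreover obtain v0 where "v0 \<in> S1 \<alpha>2 (- D) (- d)"
    using slater2 by (auto simp: S2_eq_S1_uminus)
  ultimately show ?thesis
    unfolding S2_eq_S1_uminus
    by (intro bilinear_saddle_point bilinear_payoff compact_S1 convex_S1) auto
qed

end
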